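(* For every positive integer $n$, the number $v(n)$ is odd.
   Context: Let $A$ be a finite set of $n$ candidates. A voter is a linear order (ranking) of $A$, written as a permutation $x_1x_2\cdots x_n$ of $A$, meaning the voter prefers $x_i$ to $x_j$ iff $i<j$. A set of voters is a nonempty finite multiset of voters (several voters may have the same ranking). A strong preference pattern on $A$ is a tournament $T$ on vertex set $A$ (for each pair of distinct $a,b\in A$ exactly one of the arcs $(a,b)$, $(b,a)$ is present). A set of voters $U$ generates $T$ if for every pair of distinct candidates $a,b$, the arc $(a,b)$ is in $T$ if and only if strictly more voters of $U$ rank $a$ above $b$ than rank $b$ above $a$ (so in particular no pair is tied). For a tournament $T$, $v(T)$ denotes the minimum size of a set of voters generating $T$, and $v(n)=\max\{v(T): T \text{ a tournament on } n \text{ vertices}\}$. *)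

theory Defs
  imports Main "HOL-Library.Multiset"
begin

text \<open>Candidates are {0..<n}. A voter is a ranking: a list listing every candidate exactly once,
  earlier positions being preferred.\<close>

definition is_voter :: "nat \<Rightarrow> nat list \<Rightarrow> bool" where
  "is_voter n xs \<longleftrightarrow> distinct xs \<and> set xs = {0..<n}"

definition prefers :: "nat list \<Rightarrow> nat \<Rightarrow> nat \<Rightarrow> bool" where
  "prefers xs a b \<longleftrightarrow> (\<exists>i j. i < j \<and> j < length xs \<and> xs ! i = a \<and> xs ! j = b)"

definition is_tournament :: "nat \<Rightarrow> (nat \<Rightarrow> nat \<Rightarrow> bool) \<Rightarrow> bool" where
  "is_tournament n T \<longleftrightarrow>
     (\<forall>a b. T a b \<longrightarrow> a < n \<and> b < n \<and> a \<noteq> b) \<and>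
     (\<forall>a<n. \<forall>b<n. a \<noteq> b \<longrightarrow> (T a b \<longleftrightarrow> \<not> T b a))"

definition is_voter_set :: "nat \<Rightarrow> nat list multiset \<Rightarrow> bool" where
  "is_voter_set n U \<longleftrightarrow> U \<noteq> {#} \<and> (\<forall>xs\<in>#U. is_voter n xs)"

definition generates :: "nat \<Rightarrow> nat list multiset \<Rightarrow> (nat \<Rightarrow> nat \<Rightarrow> bool) \<Rightarrow> bool" where
  "generates n U T \<longleftrightarrow> is_voter_set n U \<and>
     (\<forall>a<n. \<forall>b<n. a \<noteq> b \<longrightarrow>
        (T a b \<longleftrightarrow> size (filter_mset (\<lambda>xs. prefers xs b a) U)
                       < size (filter_mset (\<lambda>xs. prefers xs a b) U)))"

definition v_T :: "nat \<Rightarrow> (nat \<Rightarrow> nat \<Rightarrow> bool) \<Rightarrow> nat" where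
  "v_T n T = (LEAST k. \<exists>U. generates n U T \<and> size U = k)"

definition v :: "nat \<Rightarrow> nat" where
  "v n = Max {v_T n T | T. is_tournament n T}"

end

theory Submission
  imports Defs
begin

text \<open>Every tournament is generated by some voter set (McGarvey): a pair of voters ranking
  \<open>a\<close> above \<open>b\<close> in both rankings and every other pair of candidates in opposite orders shifts the
  margin of \<open>(a, b)\<close> by two and leaves all other margins unchanged; so \<open>v(T)\<close> is well defined.
  If a voter set of even size generates \<open>T\<close>, every pairwise margin is even and nonzero, hence
  at least two, and removing an arbitrary voter changes each margin by one only. So a minimum
  generating set has odd size, and \<open>v(n)\<close>, being some \<open>v(T)\<close>, is odd.\<close>

lemma prefers_iff_nth: "prefers xs a b \<longleftrightarrow> (\<exists>j<length xs. \<exists>i<j. xs ! i = a \<and> xs ! j = b)"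
  unfolding prefers_def by blast

lemma prefers_Nil [simp]: "\<not> prefers [] a b"
  by (simp add: prefers_def)

lemma prefers_Cons [simp]: "prefers (x # xs) a b \<longleftrightarrow> (x = a \<and> b \<in> set xs) \<or> prefers xs a b"
  unfolding prefers_iff_nth by (auto simp: Ex_less_Suc2 in_set_conv_nth)

lemma prefers_imp_in_set: "prefers xs a b \<Longrightarrow> a \<in> set xs \<and> b \<in> set xs"
  by (induction xs) auto

lemma prefers_append:
  "prefers (xs @ ys) a b \<longleftrightarrow> prefers xs a b \<or> prefers ys a b \<or> (a \<in> set xs \<and> b \<in> set ys)"
  by (induction xs) auto

lemma prefers_rev: "prefers (rev xs) a b \<longleftrightarrow> prefers xs b a"
  by (induction xs) (auto simp: prefers_append dest: prefers_imp_in_set)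

lemma prefers_swap_iff:
  "distinct xs \<Longrightarrow> a \<in> set xs \<Longrightarrow> b \<in> set xs \<Longrightarrow> a \<noteq> b \<Longrightarrow> prefers xs b a \<longleftrightarrow> \<not> prefers xs a b"
  by (induction xs) (auto dest: prefers_imp_in_set)

definition votes :: "nat list multiset \<Rightarrow> nat \<Rightarrow> nat \<Rightarrow> nat" where
  "votes U a b = size {# xs \<in># U. prefers xs a b #}"

lemma votes_empty [simp]: "votes {#} a b = 0"
  by (simp add: votes_def)

lemma votes_add_mset [simp]:
  "votes (add_mset xs U) a b = votes U a b + (if prefers xs a b then 1 else 0)"
  by (simp add: votes_def)

lemma votes_union [simp]: "votes (U + W) a b = votes U a b + votes W a b"
  by (simp add: votes_def)

lemma votes_sum: "finite A \<Longrightarrow> votes (\<Sum>p\<in>A. f p) a b = (\<Sum>p\<in>A. votes (f p) a b)"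
  by (induction A rule: finite_induct) auto

lemma votes_add_votes_swap:
  assumes "\<forall>xs\<in>#U. is_voter n xs" "a < n" "b < n" "a \<noteq> b"
  shows "votes U a b + votes U b a = size U"
  using assms(1) by (induction U) (auto simp: is_voter_def prefers_swap_iff assms(2-4))

lemma votes_remove_bounds:
  assumes "z \<in># U"
  shows "votes (U - {#z#}) a b \<le> votes U a b" "votes U a b \<le> votes (U - {#z#}) a b + 1"
  using votes_add_mset[of z "U - {#z#}" a b] by (simp_all add: insert_DiffM[OF assms])

definition margin :: "nat list multiset \<Rightarrow> nat \<Rightarrow> nat \<Rightarrow> int" where
  "margin U a b = int (votes U a b) - int (votes U b a)"

lemma margin_union: "margin (U + W) a b = margin U a b + margin W a b"
  by (simp add: margin_def)

lemma margin_sum: "finite A \<Longrightarrow> margin (\<Sum>p\<in>A. f p) a b = (\<Sum>p\<in>A. margin (f p) a b)"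
  by (simp add: margin_def votes_sum sum_subtractf)

lemma margin_reversal_pair [simp]: "margin {#xs, rev xs#} a b = 0"
  by (simp add: margin_def prefers_rev)

lemma generates_iff_votes:
  "generates n U T \<longleftrightarrow> is_voter_set n U \<and>
     (\<forall>a<n. \<forall>b<n. a \<noteq> b \<longrightarrow> (T a b \<longleftrightarrow> votes U b a < votes U a b))"
  unfolding generates_def votes_def ..

lemma generates_iff_margin:
  "generates n U T \<longleftrightarrow> is_voter_set n U \<and>
     (\<forall>a<n. \<forall>b<n. a \<noteq> b \<longrightarrow> (T a b \<longleftrightarrow> margin U a b > 0))"
  unfolding generates_iff_votes margin_def by simp

lemma tournament_arc: "is_tournament n T \<Longrightarrow> T a b \<Longrightarrow> a < n \<and> b < n \<and> a \<noteq> b"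
  unfolding is_tournament_def by blast

lemma tournament_flip:
  "is_tournament n T \<Longrightarrow> a < n \<Longrightarrow> b < n \<Longrightarrow> a \<noteq> b \<Longrightarrow> T b a \<longleftrightarrow> \<not> T a b"
  unfolding is_tournament_def by blast

definition mcgarvey_pair :: "nat \<Rightarrow> nat \<Rightarrow> nat \<Rightarrow> nat list multiset" where
  "mcgarvey_pair n a b =
     (let R = filter (\<lambda>c. c \<noteq> a \<and> c \<noteq> b) [0..<n] in {# a # b # R, rev R @ [a, b] #})"

lemma mcgarvey_pair_voters:
  "a < n \<Longrightarrow> b < n \<Longrightarrow> a \<noteq> b \<Longrightarrow> xs \<in># mcgarvey_pair n a b \<Longrightarrow> is_voter n xs"
  unfolding mcgarvey_pair_def is_voter_def Let_def by auto

lemma margin_mcgarvey_pair: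
  assumes "a < n" "b < n" "a \<noteq> b" "x < n" "y < n" "x \<noteq> y"
  shows "margin (mcgarvey_pair n a b) x y =
           (if (x, y) = (a, b) then 2 else 0) - (if (x, y) = (b, a) then 2 else 0)"
proof -
  define R where "R = filter (\<lambda>c. c \<noteq> a \<and> c \<noteq> b) [0..<n]"
  have R: "distinct R" "set R = {0..<n} - {a, b}"
    unfolding R_def by auto
  have "prefers R y x \<longleftrightarrow> \<not> prefers R x y" if "x \<in> set R" "y \<in> set R"
    using prefers_swap_iff[OF R(1) that] assms(6) by blast
  then show ?thesis
    using R(2) assms
    by (auto simp: mcgarvey_pair_def margin_def prefers_append prefers_rev R_def[symmetric]
             dest: prefers_imp_in_set)
qed

theorem ex_generating_voter_set:
  assumes T: "is_tournament n T"
  shows "\<exists>U. generates n U T"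
proof -
  define A where "A = {(a, b). T a b}"
  have A_mem: "(a, b) \<in> A \<longleftrightarrow> T a b" for a b
    by (simp add: A_def)
  have "A \<subseteq> {0..<n} \<times> {0..<n}"
    using tournament_arc[OF T] unfolding A_def by auto
  then have A: "finite A"
    by (rule finite_subset) simp
  \<comment> \<open>The reversal pair has zero margins; it only keeps \<open>U\<close> nonempty when \<open>T\<close> has no arcs.\<close>
  define U where "U = {#[0..<n], rev [0..<n]#} + (\<Sum>(a, b)\<in>A. mcgarvey_pair n a b)"
  have "is_voter n xs" if xs: "xs \<in># U" for xs
  proof -
    consider "xs = [0..<n] \<or> xs = rev [0..<n]" | a b where "T a b" "xs \<in># mcgarvey_pair n a b"
      using xs by (auto simp: U_def set_mset_sum[OF A] A_mem)
    then show ?thesis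
    proof cases
      case 1
      then show ?thesis by (auto simp: is_voter_def)
    next
      case (2 a b)
      then show ?thesis using tournament_arc[OF T] mcgarvey_pair_voters by blast
    qed
  qed
  then have voters: "is_voter_set n U"
    by (simp add: is_voter_set_def U_def)
  have margin: "margin U x y = (if T x y then 2 else 0) - (if T y x then 2 else 0)"
    if "x < n" "y < n" "x \<noteq> y" for x y
  proof -
    have "margin U x y = (\<Sum>(a, b)\<in>A. margin (mcgarvey_pair n a b) x y)"
      unfolding U_def margin_union margin_sum[OF A] by (simp add: split_def)
    also have "\<dots> = (\<Sum>p\<in>A. (if p = (x, y) then 2 else 0) - (if p = (y, x) then 2 else 0))"
      using tournament_arc[OF T] that by (intro sum.cong) (auto simp: A_def margin_mcgarvey_pair split: if_splits)
    also have "\<dots> = (if T x y then 2 else 0) - (if T y x then 2 else 0)"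
      by (simp add: sum_subtractf sum.delta[OF A] A_mem)
    finally show ?thesis .
  qed
  have "generates n U T"
    unfolding generates_iff_margin
  proof (intro conjI allI impI voters)
    fix a b assume ab: "a < n" "b < n" "a \<noteq> b"
    show "T a b \<longleftrightarrow> margin U a b > 0"
      using margin[OF ab] tournament_flip[OF T ab] by auto
  qed
  then show ?thesis ..
qed

lemma majority_survives_removal:
  assumes voters: "\<forall>xs\<in>#U. is_voter n xs" and ab: "a < n" "b < n" "a \<noteq> b"
    and even: "even (size U)" and majority: "votes U b a < votes U a b" and z: "z \<in># U"
  shows "votes (U - {#z#}) b a < votes (U - {#z#}) a b"
proof -
  have "votes U a b + votes U b a = size U"
    using votes_add_votes_swap[OF voters ab] .
  with even majority have "votes U b a + 2 \<le> votes U a b"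
    by presburger
  then show ?thesis
    using votes_remove_bounds[OF z, of b a] votes_remove_bounds[OF z, of a b] by linarith
qed

lemma generates_remove_voter:
  assumes T: "is_tournament n T" and gen: "generates n U T"
    and even: "even (size U)" and z: "z \<in># U"
  shows "generates n (U - {#z#}) T"
proof -
  have U: "U \<noteq> {#}" "\<forall>xs\<in>#U. is_voter n xs"
    using gen by (simp_all add: generates_iff_votes is_voter_set_def)
  have "size (U - {#z#}) \<noteq> 0"
    using size_Diff_singleton[OF z] size_Diff1_less[OF z] even by presburger
  then have "U - {#z#} \<noteq> {#}"
    by simp
  then have voters: "is_voter_set n (U - {#z#})"
    using U(2) by (auto simp: is_voter_set_def dest: in_diffD)
  show ?thesis
    unfolding generates_iff_votes
  proof (intro conjI allI impI voters)
    fix a b assume ab: "a < n" "b < n" "a \<noteq> b"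
    have ba: "b < n" "a < n" "b \<noteq> a"
      using ab by auto
    have gen_ab: "T a b \<longleftrightarrow> votes U b a < votes U a b" and gen_ba: "T b a \<longleftrightarrow> votes U a b < votes U b a"
      using gen ab unfolding generates_iff_votes by auto
    show "T a b \<longleftrightarrow> votes (U - {#z#}) b a < votes (U - {#z#}) a b"
    proof
      assume "T a b"
      then show "votes (U - {#z#}) b a < votes (U - {#z#}) a b"
        using majority_survives_removal[OF U(2) ab even _ z] gen_ab by blast
    next
      assume less: "votes (U - {#z#}) b a < votes (U - {#z#}) a b"
      show "T a b"
      proof (rule ccontr)
        assume "\<not> T a b"
        then have "T b a"
          using tournament_flip[OF T ab] by blast
        then have "votes (U - {#z#}) a b < votes (U - {#z#}) b a"
          using majority_survives_removal[OF U(2) ba even _ z] gen_ba by blast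
        with less show False
          by simp
      qed
    qed
  qed
qed

lemma odd_v_T:
  assumes T: "is_tournament n T"
  shows "odd (v_T n T)"
proof
  assume even: "even (v_T n T)"
  let ?P = "\<lambda>k. \<exists>U. generates n U T \<and> size U = k"
  obtain U0 where "generates n U0 T"
    using ex_generating_voter_set[OF T] ..
  then have "?P (size U0)"
    by blast
  then have "?P (v_T n T)"
    unfolding v_T_def by (rule LeastI[of ?P])
  then obtain U where U: "generates n U T" "size U = v_T n T"
    by blast
  then obtain z where z: "z \<in># U"
    by (auto simp: generates_iff_votes is_voter_set_def)
  have "generates n (U - {#z#}) T"
    using generates_remove_voter[OF T U(1) _ z] even U(2) by simp
  then have "?P (size (U - {#z#}))"
    by blast
  then have "v_T n T \<le> size (U - {#z#})"
    unfolding v_T_def by (rule Least_le)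
  moreover have "size (U - {#z#}) < v_T n T"
    using size_Diff1_less[OF z] U(2) by simp
  ultimately show False
    by simp
qed

lemma finite_tournaments: "finite {T. is_tournament n T}"
proof (rule finite_subset)
  show "{T. is_tournament n T} \<subseteq> (\<lambda>A a b. (a, b) \<in> A) ` Pow ({0..<n} \<times> {0..<n})"
  proof
    fix T assume "T \<in> {T. is_tournament n T}"
    then have "{(a, b). T a b} \<in> Pow ({0..<n} \<times> {0..<n})"
      by (auto dest: tournament_arc)
    then show "T \<in> (\<lambda>A a b. (a, b) \<in> A) ` Pow ({0..<n} \<times> {0..<n})"
      by (rule rev_image_eqI) simp
  qed
qed simp

theorem lemma1:
  fixes n :: nat
  assumes "n \<ge> 1"
  shows "odd (v n)"
proof -
  have "is_tournament n (\<lambda>a b. a < b \<and> b < n)"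
    by (auto simp: is_tournament_def)
  then have "{v_T n T | T. is_tournament n T} \<noteq> {}"
    by blast
  moreover have "finite {v_T n T | T. is_tournament n T}"
    using finite_tournaments by (simp add: setcompr_eq_image)
  ultimately have "v n \<in> {v_T n T | T. is_tournament n T}"
    unfolding v_def by (rule Max_in[rotated])
  then show ?thesis
    using odd_v_T by auto
qed

end
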